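(* Let $V(x)=x(1+xU(x))$, where $U$ is absolutely monotonic on some interval $(0,R)$ (i.e. $U$ has a power series expansion $U(x)=a_1+a_2x+a_3x^2+\dots$ with non-negative coefficients there). Define $s(z)=\exp\left(\int\frac{dz}{V(z)}\right)$ and $b(z)=\exp\left(\int\frac{z\,dz}{V(z)}\right)$ (with arbitrary fixed antiderivatives). Then $V$ is the covariance of the power series distribution of the function $\omega(y)=b(s^{-1}(y))$.
   Context: For a power series $\omega(y)=\sum_k a_ky^k$ with non-negative coefficients and positive radius of convergence, the power series distribution (PSD) of $\omega$ with parameter $y>0$ is the law on $\{0,1,2,\dots\}$ given by $P\{\xi=k\}=a_ky^k/\omega(y)$. Its mean is $x(y)=y\omega'(y)/\omega(y)$ and its variance is $y\,x'(y)>0$, so $x(\cdot)$ has an inverse $y=f(x)$ on its range. The covariance of the PSD of $\omega$ is the function $V(x)=f(x)/f'(x)$, i.e. the variance expressed as a function of the mean $x$. Here $s^{-1}$ denotes the inverse function of $s$. *)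

theory Defs
  imports "HOL-Analysis.Analysis"
begin

definition ps_fun :: "(nat \<Rightarrow> real) \<Rightarrow> real \<Rightarrow> real" where
  "ps_fun c y = (\<Sum>k. c k * y ^ k)"

definition psd_mean :: "(nat \<Rightarrow> real) \<Rightarrow> real \<Rightarrow> real" where
  "psd_mean c y = y * deriv (ps_fun c) y / ps_fun c y"

definition psd_cov :: "(nat \<Rightarrow> real) \<Rightarrow> real \<Rightarrow> real \<Rightarrow> real" where
  "psd_cov c r x =
     (let f = the_inv_into {0<..<r} (psd_mean c) in f x / deriv f x)"

end

(* Writing z(y) = y H(y), the equation y z' = V(z) becomes H' = H^2 U(y H). It has a formal
   power series solution H = 1 + ... whose coefficients are non-negative, since those of U are, and
   a barrier argument on its partial sums shows that it converges near 0. Along z one has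
   (S o z)' = 1/y and (B o z)' = H, so s(z(y)) = y / q and b(z(y)) = C exp(G(y)) for constants q, C > 0,
   where G' = H and G(0) = 0. Hence omega(y) = b(s^-1(y)) = C exp(G(q y)) is a power series with
   non-negative coefficients, and its mean y omega'(y) / omega(y) = q y H(q y) = z(q y) = s^-1(y).
   So the inverse of the mean is s itself, and s / s' = V. *)

theory Submission
  imports Defs "HOL-Computational_Algebra.Formal_Power_Series"
begin

unbundle no vec_syntax
notation fps_nth (infixl \<open>$\<close> 75)

lemma fps_cutoff_idem [simp]: "fps_cutoff n (fps_cutoff n f) = fps_cutoff n f"
  by (simp add: fps_eq_iff)

lemma fps_cutoff_mult_cong:
  fixes f f' g g' :: "'a::comm_semiring_1 fps"
  assumes "fps_cutoff n f = fps_cutoff n f'" "fps_cutoff n g = fps_cutoff n g'"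
  shows "fps_cutoff n (f * g) = fps_cutoff n (f' * g')"
  using assms by (auto simp: fps_cutoff_eq_fps_cutoff_iff fps_mult_nth intro!: sum.cong)

lemma fps_cutoff_power_cong:
  fixes f g :: "'a::comm_semiring_1 fps"
  assumes "fps_cutoff n f = fps_cutoff n g"
  shows "fps_cutoff n (f ^ k) = fps_cutoff n (g ^ k)"
proof (induction k)
  case (Suc k)
  then show ?case
    unfolding power_Suc by (rule fps_cutoff_mult_cong[OF assms])
qed simp

lemma fps_cutoff_X_mult_cong:
  fixes f g :: "'a::comm_semiring_1 fps"
  shows "fps_cutoff n f = fps_cutoff n g \<Longrightarrow> fps_cutoff n (fps_X * f) = fps_cutoff n (fps_X * g)"
  by (auto simp: fps_cutoff_eq_fps_cutoff_iff fps_X_mult_nth)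

lemma fps_cutoff_compose_cong:
  fixes f g h :: "'a::comm_semiring_1 fps"
  assumes "fps_cutoff n f = fps_cutoff n g"
  shows "fps_cutoff n (h oo f) = fps_cutoff n (h oo g)"
proof -
  have "(f ^ i) $ k = (g ^ i) $ k" if "k < n" for i k
    using fps_cutoff_power_cong[OF assms, of i] that by (simp add: fps_cutoff_eq_fps_cutoff_iff)
  then show ?thesis
    unfolding fps_cutoff_eq_fps_cutoff_iff fps_compose_nth by (auto intro!: sum.cong)
qed

definition ode_rhs :: "(nat \<Rightarrow> real) \<Rightarrow> real fps \<Rightarrow> real fps" where
  "ode_rhs a F = F\<^sup>2 * (Abs_fps a oo (fps_X * F))"

lemma fps_cutoff_ode_rhs_cong:
  "fps_cutoff n F = fps_cutoff n G \<Longrightarrow> fps_cutoff n (ode_rhs a F) = fps_cutoff n (ode_rhs a G)"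
  unfolding ode_rhs_def
  by (intro fps_cutoff_mult_cong fps_cutoff_power_cong fps_cutoff_compose_cong fps_cutoff_X_mult_cong)

text \<open>The coefficient of order \<open>n\<close> of \<open>ode_rhs a F\<close> involves only those of \<open>F\<close> up to
  order \<open>n\<close>, so truncating \<open>F\<close> makes this recursion for \<open>fps_deriv H = ode_rhs a H\<close> well-founded.\<close>
fun ode_coeff :: "(nat \<Rightarrow> real) \<Rightarrow> nat \<Rightarrow> real" where
  "ode_coeff a 0 = 1"
| "ode_coeff a (Suc n) =
     ode_rhs a (Abs_fps (\<lambda>i. if i \<le> n then ode_coeff a i else 0)) $ n / real (Suc n)"

lemma fps_deriv_ode_coeff:
  "fps_deriv (Abs_fps (ode_coeff a)) = ode_rhs a (Abs_fps (ode_coeff a))"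
proof (rule fps_ext)
  fix n
  let ?H = "Abs_fps (ode_coeff a)"
  have "Abs_fps (\<lambda>i. if i \<le> n then ode_coeff a i else 0) = fps_cutoff (Suc n) ?H"
    by (simp add: fps_eq_iff less_Suc_eq_le)
  then have "real (Suc n) * ode_coeff a (Suc n) = fps_cutoff (Suc n) (ode_rhs a (fps_cutoff (Suc n) ?H)) $ n"
    by simp
  also have "\<dots> = ode_rhs a ?H $ n"
    by (simp only: fps_cutoff_ode_rhs_cong[OF fps_cutoff_idem]) simp
  finally show "fps_deriv ?H $ n = ode_rhs a ?H $ n"
    by simp
qed

definition nonneg_fps :: "real fps \<Rightarrow> bool" where
  "nonneg_fps F \<longleftrightarrow> (\<forall>n. 0 \<le> F $ n)"

lemma nonneg_fps_mult: "nonneg_fps F \<Longrightarrow> nonneg_fps G \<Longrightarrow> nonneg_fps (F * G)"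
  by (auto simp: nonneg_fps_def fps_mult_nth intro!: sum_nonneg)

lemma nonneg_fps_power: "nonneg_fps F \<Longrightarrow> nonneg_fps (F ^ k)"
  by (induction k) (simp_all add: nonneg_fps_mult, simp add: nonneg_fps_def)

lemma nonneg_fps_X_mult: "nonneg_fps F \<Longrightarrow> nonneg_fps (fps_X * F)"
  by (simp add: nonneg_fps_def)

lemma nonneg_fps_compose: "nonneg_fps G \<Longrightarrow> nonneg_fps F \<Longrightarrow> nonneg_fps (G oo F)"
  using nonneg_fps_power[of F]
  by (auto simp: nonneg_fps_def fps_compose_nth intro!: sum_nonneg mult_nonneg_nonneg)

lemma nonneg_fps_ode_rhs:
  "(\<And>k. 0 \<le> a k) \<Longrightarrow> nonneg_fps F \<Longrightarrow> nonneg_fps (ode_rhs a F)"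
  unfolding ode_rhs_def
  by (intro nonneg_fps_mult nonneg_fps_power nonneg_fps_compose nonneg_fps_X_mult)
     (simp_all add: nonneg_fps_def)

lemma ode_coeff_nonneg:
  assumes "\<And>k. 0 \<le> a k"
  shows "0 \<le> ode_coeff a n"
proof (induction n rule: less_induct)
  case (less n)
  show ?case
  proof (cases n)
    case (Suc m)
    have "nonneg_fps (Abs_fps (\<lambda>i. if i \<le> m then ode_coeff a i else 0))"
      using less Suc by (simp add: nonneg_fps_def)
    then show ?thesis
      using nonneg_fps_ode_rhs[OF assms] Suc by (simp add: nonneg_fps_def)
  qed simp
qed

lemma sums_fps_mult_nonneg:
  fixes F G :: "real fps"
  assumes F: "nonneg_fps F" and G: "nonneg_fps G" and y: "0 \<le> y"
    and P: "(\<lambda>n. F $ n * y ^ n) sums P" and Q: "(\<lambda>n. G $ n * y ^ n) sums Q"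
  shows "(\<lambda>n. (F * G) $ n * y ^ n) sums (P * Q)"
proof -
  have "summable (\<lambda>n. norm (F $ n * y ^ n))" "summable (\<lambda>n. norm (G $ n * y ^ n))"
    using P Q F G y by (simp_all add: sums_iff nonneg_fps_def)
  from Cauchy_product_sums[OF this]
  have "(\<lambda>k. \<Sum>i\<le>k. F $ i * y ^ i * (G $ (k - i) * y ^ (k - i))) sums (P * Q)"
    using P Q by (simp add: sums_iff)
  moreover have "(\<Sum>i\<le>k. F $ i * y ^ i * (G $ (k - i) * y ^ (k - i))) = (F * G) $ k * y ^ k" for k
  proof -
    have "F $ i * y ^ i * (G $ (k - i) * y ^ (k - i)) = F $ i * G $ (k - i) * y ^ k"
      if "i \<le> k" for i
    proof -
      have "y ^ i * y ^ (k - i) = y ^ k"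
        using that by (simp flip: power_add)
      then show ?thesis
        by (metis mult.assoc mult.left_commute)
    qed
    then have "(\<Sum>i\<le>k. F $ i * y ^ i * (G $ (k - i) * y ^ (k - i))) =
               (\<Sum>i\<le>k. F $ i * G $ (k - i) * y ^ k)"
      by (intro sum.cong) simp_all
    then show ?thesis
      by (simp add: fps_mult_nth atLeast0AtMost sum_distrib_right)
  qed
  ultimately show ?thesis
    by simp
qed

lemma sums_fps_power_nonneg:
  fixes F :: "real fps"
  assumes "nonneg_fps F" "0 \<le> y" "(\<lambda>n. F $ n * y ^ n) sums P"
  shows "(\<lambda>n. (F ^ k) $ n * y ^ n) sums (P ^ k)"
proof (induction k)
  case 0
  have "(\<lambda>n. (1 :: real fps) $ n * y ^ n) = (\<lambda>n. if n = 0 then 1 else 0)"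
    by auto
  then show ?case
    using sums_single[of 0 "\<lambda>_. 1 :: real"] by simp
next
  case (Suc k)
  then show ?case
    using sums_fps_mult_nonneg[OF assms(1) nonneg_fps_power[OF assms(1)] assms(2,3)] by simp
qed

lemma sums_fps_X_mult:
  fixes F :: "real fps"
  assumes "(\<lambda>n. F $ n * y ^ n) sums P"
  shows "(\<lambda>n. (fps_X * F) $ n * y ^ n) sums (y * P)"
proof -
  have "(\<lambda>n. (fps_X * F) $ Suc n * y ^ Suc n) sums (y * P)"
    using sums_mult[OF assms, of y] by (simp add: algebra_simps)
  then show ?thesis
    by (subst (asm) sums_Suc_iff) simp
qed

text \<open>For non-negative coefficients the double series defining the composition may be
  summed in either order.\<close>
lemma sums_fps_compose_nonneg:
  fixes F G :: "real fps"
  assumes F: "nonneg_fps F" and G: "nonneg_fps G" "G $ 0 = 0" and y: "0 \<le> y"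
    and g: "(\<lambda>n. G $ n * y ^ n) sums g" and f: "(\<lambda>k. F $ k * g ^ k) sums f"
  shows "(\<lambda>n. (F oo G) $ n * y ^ n) sums f"
proof -
  define t where "t = (\<lambda>(k, n). F $ k * (G ^ k) $ n * y ^ n)"
  have t_nonneg: "0 \<le> t (k, n)" for k n
    using F nonneg_fps_power[OF G(1), of k] y by (simp add: t_def nonneg_fps_def)
  have g_nonneg: "0 \<le> g"
    using sums_le[OF _ sums_zero g] G(1) y by (simp add: nonneg_fps_def)
  have rows: "((\<lambda>n. t (k, n)) has_sum (F $ k * g ^ k)) UNIV" for k
    using sums_mult[OF sums_fps_power_nonneg[OF G(1) y g, of k], of "F $ k"] t_nonneg
    by (intro sums_nonneg_imp_has_sum) (simp_all add: t_def algebra_simps)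
  have total: "((\<lambda>k. F $ k * g ^ k) has_sum f) UNIV"
    using F g_nonneg by (intro sums_nonneg_imp_has_sum[OF f]) (simp add: nonneg_fps_def)
  have "t summable_on UNIV \<times> UNIV"
    using summable_on_SigmaI[where f = t, OF rows has_sum_imp_summable[OF total] t_nonneg] by simp
  then have "(t has_sum f) (UNIV \<times> UNIV)"
    by (rule has_sum_SigmaI[OF rows total])
  then have "((\<lambda>(n, k). t (k, n)) has_sum f) (UNIV \<times> UNIV)"
    using has_sum_swap[of t UNIV UNIV f] by simp
  moreover have "((\<lambda>k. t (k, n)) has_sum ((F oo G) $ n * y ^ n)) UNIV" for n
  proof -
    have "t (k, n) = 0" if "k \<notin> {0..n}" for k
      using startsby_zero_power_prefix[OF G(2), of k] that by (simp add: t_def)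
    then have "((\<lambda>k. t (k, n)) has_sum (\<Sum>k=0..n. t (k, n))) UNIV"
      using has_sum_cong_neutral[of UNIV "{0..n}" "\<lambda>k. t (k, n)" "\<lambda>k. t (k, n)"]
        has_sum_finite[of "{0..n}" "\<lambda>k. t (k, n)"] by auto
    then show ?thesis
      by (simp add: t_def fps_compose_nth sum_distrib_right)
  qed
  ultimately have "((\<lambda>n. (F oo G) $ n * y ^ n) has_sum f) UNIV"
    using has_sum_SigmaD[where f = "\<lambda>(n, k). t (k, n)" and A = UNIV and B = "\<lambda>_. UNIV"] by simp
  then show ?thesis
    by (rule has_sum_imp_sums)
qed

lemma summable_powser_nonneg_mono:
  fixes c :: "nat \<Rightarrow> real"
  assumes "\<And>k. 0 \<le> c k" "summable (\<lambda>k. c k * x' ^ k)" "0 \<le> x" "x \<le> x'"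
  shows "summable (\<lambda>k. c k * x ^ k)"
proof (rule summable_comparison_test'[OF assms(2), of 0])
  show "norm (c k * x ^ k) \<le> c k * x' ^ k" for k
    using assms by (simp add: mult_left_mono power_mono)
qed

lemma ps_fun_nonneg:
  assumes "\<And>k. 0 \<le> c k" "summable (\<lambda>k. c k * x ^ k)" "0 \<le> x"
  shows "0 \<le> ps_fun c x"
  unfolding ps_fun_def using assms by (intro suminf_nonneg) auto

lemma ps_fun_mono:
  assumes "\<And>k. 0 \<le> c k" "summable (\<lambda>k. c k * x' ^ k)" "0 \<le> x" "x \<le> x'"
  shows "ps_fun c x \<le> ps_fun c x'"
  unfolding ps_fun_def
proof (rule suminf_le)
  show "c k * x ^ k \<le> c k * x' ^ k" for k
    using assms by (simp add: mult_left_mono power_mono)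
qed (use assms summable_powser_nonneg_mono[OF assms] in simp_all)

lemma sums_ode_rhs:
  assumes a: "\<And>k. 0 \<le> a k" and F: "nonneg_fps F" and y: "0 \<le> y"
    and P: "(\<lambda>n. F $ n * y ^ n) sums P" and U: "summable (\<lambda>k. a k * (y * P) ^ k)"
  shows "(\<lambda>n. ode_rhs a F $ n * y ^ n) sums (P\<^sup>2 * ps_fun a (y * P))"
proof -
  have nonneg: "nonneg_fps (Abs_fps a oo (fps_X * F))"
    using a by (intro nonneg_fps_compose nonneg_fps_X_mult F) (simp add: nonneg_fps_def)
  have "(\<lambda>n. (Abs_fps a oo (fps_X * F)) $ n * y ^ n) sums ps_fun a (y * P)"
  proof (rule sums_fps_compose_nonneg)
    show "(\<lambda>k. Abs_fps a $ k * (y * P) ^ k) sums ps_fun a (y * P)"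
      using U by (simp add: ps_fun_def summable_sums)
  qed (use a F y sums_fps_X_mult[OF P] in \<open>simp_all add: nonneg_fps_X_mult nonneg_fps_def\<close>)
  from sums_fps_mult_nonneg[OF nonneg_fps_power[OF F] nonneg y sums_fps_power_nonneg[OF F y P] this]
  show ?thesis
    by (simp add: ode_rhs_def)
qed

lemma first_zero_after_negative:
  fixes d :: "real \<Rightarrow> real"
  assumes cont: "continuous_on {0..t} d" and "d 0 < 0" "0 \<le> d t" "0 \<le> t"
  obtains t0 where "0 < t0" "t0 \<le> t" "d t0 = 0" "\<And>s. 0 \<le> s \<Longrightarrow> s < t0 \<Longrightarrow> d s < 0"
proof -
  define Z where "Z = {s \<in> {0..t}. d s = 0}"
  have "Z \<noteq> {}"
    using IVT'[of d 0 0 t] assms by (auto simp: Z_def)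
  moreover have "bdd_below Z"
    by (auto simp: Z_def bdd_below_def)
  moreover have "closed Z"
    unfolding Z_def using cont by (rule continuous_closed_preimage_constant) simp
  ultimately have "Inf Z \<in> Z"
    by (rule closed_contains_Inf)
  then obtain t0 where t0: "0 \<le> t0" "t0 \<le> t" "d t0 = 0" and first: "\<And>s. s \<in> Z \<Longrightarrow> t0 \<le> s"
    using \<open>bdd_below Z\<close> by (auto simp: Z_def intro: cInf_lower)
  have "d s < 0" if s: "0 \<le> s" "s < t0" for s
  proof (rule ccontr)
    assume "\<not> d s < 0"
    moreover have "continuous_on {0..s} d"
      using cont by (rule continuous_on_subset) (use s t0 in auto)
    ultimately obtain s' where "0 \<le> s'" "s' \<le> s" "d s' = 0"
      using IVT'[of d 0 0 s] assms s by auto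
    then show False
      using first[of s'] s t0 by (auto simp: Z_def)
  qed
  moreover have "0 < t0"
    using t0 assms by (cases "t0 = 0") auto
  ultimately show thesis
    using that t0 by blast
qed

lemma negative_if_zeros_decreasing:
  fixes d d' :: "real \<Rightarrow> real"
  assumes d0: "d 0 < 0"
    and der: "\<And>t. 0 \<le> t \<Longrightarrow> t \<le> b \<Longrightarrow> (d has_real_derivative d' t) (at t)"
    and zeros: "\<And>t. 0 \<le> t \<Longrightarrow> t \<le> b \<Longrightarrow> d t = 0 \<Longrightarrow> d' t < 0"
    and t: "0 \<le> t" "t \<le> b"
  shows "d t < 0"
proof (rule ccontr)
  assume "\<not> d t < 0"
  have "continuous_on {0..t} d"
  proof (rule DERIV_atLeastAtMost_imp_continuous_on)
    show "\<exists>y. (d has_real_derivative y) (at s)" if "0 \<le> s" "s \<le> t" for s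
      using der[of s] that t by auto
  qed
  then obtain t0 where t0: "0 < t0" "t0 \<le> t" "d t0 = 0" and before: "\<And>s. 0 \<le> s \<Longrightarrow> s < t0 \<Longrightarrow> d s < 0"
    using first_zero_after_negative d0 \<open>\<not> d t < 0\<close> t by (metis linorder_not_le)
  obtain \<delta> where "\<delta> > 0" and \<delta>: "\<And>h. 0 < h \<Longrightarrow> h < \<delta> \<Longrightarrow> d t0 < d (t0 - h)"
    using DERIV_neg_dec_left[OF der zeros] t0 t by (meson less_imp_le order.trans)
  define h where "h = min \<delta> t0 / 2"
  have "d t0 < d (t0 - h)"
    using \<delta> \<open>\<delta> > 0\<close> \<open>0 < t0\<close> by (simp add: h_def)
  moreover have "d (t0 - h) < 0"
    using before \<open>\<delta> > 0\<close> \<open>0 < t0\<close> by (simp add: h_def)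
  ultimately show False
    using t0 by simp
qed

lemma diffs_ode_coeff: "diffs (ode_coeff a) = fps_nth (ode_rhs a (Abs_fps (ode_coeff a)))"
  using arg_cong[OF fps_deriv_ode_coeff[of a], of fps_nth] by (simp add: diffs_def fun_eq_iff)

lemma has_real_derivative_partial_powser:
  "((\<lambda>y. \<Sum>n<Suc N. c n * y ^ n) has_real_derivative (\<Sum>n<N. diffs c n * y ^ n)) (at y)"
proof -
  have "((\<lambda>y. \<Sum>n<Suc N. c n * y ^ n) has_real_derivative (\<Sum>n<Suc N. c n * (real n * y ^ (n - 1)))) (at y)"
    by (auto intro!: derivative_eq_intros sum.cong simp: mult_ac)
  also have "(\<Sum>n<Suc N. c n * (real n * y ^ (n - 1))) = (\<Sum>n<N. diffs c n * y ^ n)"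
    by (subst sum.lessThan_Suc_shift) (simp add: diffs_def mult_ac)
  finally show ?thesis .
qed

text \<open>Only the coefficients of order at most \<open>N\<close> enter the derivative of the \<open>N\<close>-th
  partial sum, so it is bounded by the right-hand side evaluated at the partial sum itself.\<close>
lemma ode_partial_sum_deriv_le:
  assumes a: "\<And>k. 0 \<le> a k" and y: "0 \<le> y"
    and P_def: "P = (\<Sum>n<Suc N. ode_coeff a n * y ^ n)"
    and U: "summable (\<lambda>k. a k * (y * P) ^ k)"
  shows "(\<Sum>n<N. diffs (ode_coeff a) n * y ^ n) \<le> P\<^sup>2 * ps_fun a (y * P)"
proof -
  define T where "T = fps_cutoff (Suc N) (Abs_fps (ode_coeff a))"
  have T: "nonneg_fps T"
    using ode_coeff_nonneg[OF a] by (simp add: T_def nonneg_fps_def)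
  have "(\<lambda>n. T $ n * y ^ n) sums (\<Sum>n<Suc N. T $ n * y ^ n)"
    by (rule sums_finite) (simp_all add: T_def)
  then have T_sums: "(\<lambda>n. T $ n * y ^ n) sums P"
    by (simp add: P_def T_def)
  have "diffs (ode_coeff a) n = ode_rhs a T $ n" if "n < N" for n
    using fps_cutoff_ode_rhs_cong[of "Suc N" T "Abs_fps (ode_coeff a)" a] that
    by (simp add: T_def diffs_ode_coeff fps_cutoff_eq_fps_cutoff_iff)
  then have "(\<Sum>n<N. diffs (ode_coeff a) n * y ^ n) = (\<Sum>n<N. ode_rhs a T $ n * y ^ n)"
    by simp
  also have "\<dots> \<le> (\<Sum>n. ode_rhs a T $ n * y ^ n)"
    using sums_ode_rhs[OF a T y T_sums U] nonneg_fps_ode_rhs[OF a T] y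
    by (intro sum_le_suminf) (auto simp: sums_iff nonneg_fps_def)
  also have "\<dots> = P\<^sup>2 * ps_fun a (y * P)"
    using sums_ode_rhs[OF a T y T_sums U] by (simp add: sums_iff)
  finally show ?thesis .
qed

lemma ode_partial_sum_below_line:
  assumes a: "\<And>k. 0 \<le> a k"
    and a_summable: "\<And>x. 0 \<le> x \<Longrightarrow> x < R \<Longrightarrow> summable (\<lambda>k. a k * x ^ k)"
    and y0: "0 < y0" "6 * y0 \<le> R" "L * y0 \<le> 1" and L: "3\<^sup>2 * ps_fun a (R / 2) < L"
    and y: "0 \<le> y" "y \<le> y0"
  shows "(\<Sum>n<Suc N. ode_coeff a n * y ^ n) < 2 + L * y"
proof -
  let ?P = "\<lambda>t. \<Sum>n<Suc N. ode_coeff a n * t ^ n"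
  let ?P' = "\<lambda>t. \<Sum>n<N. diffs (ode_coeff a) n * t ^ n"
  have "0 \<le> ps_fun a (R / 2)"
    using y0 by (intro ps_fun_nonneg a a_summable) simp_all
  then have "0 \<le> L"
    using L by simp
  text \<open>On the line \<open>2 + L t\<close> the partial sum is at most \<open>3\<close>, so its slope is below \<open>L\<close>.\<close>
  have crossing: "?P' t < L" if t: "0 \<le> t" "t \<le> y0" and on_line: "?P t = 2 + L * t" for t
  proof -
    have "L * t \<le> 1"
      using y0 t \<open>0 \<le> L\<close> by (meson mult_left_mono order.trans)
    then have P: "0 \<le> ?P t" "?P t \<le> 3"
      using on_line t \<open>0 \<le> L\<close> by auto
    then have tP: "0 \<le> t * ?P t" "t * ?P t \<le> R / 2"
      using t y0 mult_left_mono[OF P(2) t(1)] by auto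
    have "?P' t \<le> (?P t)\<^sup>2 * ps_fun a (t * ?P t)"
      using tP y0 by (intro ode_partial_sum_deriv_le a t(1) refl a_summable) auto
    also have "\<dots> \<le> 3\<^sup>2 * ps_fun a (R / 2)"
      using tP y0 P by (intro mult_mono power_mono ps_fun_mono ps_fun_nonneg a a_summable) auto
    finally show ?thesis
      using L by simp
  qed
  have "?P y - (2 + L * y) < 0"
  proof (rule negative_if_zeros_decreasing[where d = "\<lambda>t. ?P t - (2 + L * t)" and b = y0
        and d' = "\<lambda>t. ?P' t - L"])
    show "?P 0 - (2 + L * 0) < 0"
      by (simp add: sum.lessThan_Suc_shift)
    show "((\<lambda>t. ?P t - (2 + L * t)) has_real_derivative ?P' t - L) (at t)" for t
      by (rule DERIV_diff[OF has_real_derivative_partial_powser]) (auto intro!: derivative_eq_intros)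
  qed (use y crossing in auto)
  then show ?thesis
    by simp
qed

lemma ode_partial_sums_bounded:
  assumes R: "0 < R" and a: "\<And>k. 0 \<le> a k"
    and a_summable: "\<And>x. 0 \<le> x \<Longrightarrow> x < R \<Longrightarrow> summable (\<lambda>k. a k * x ^ k)"
  obtains y0 where "0 < y0" "3 * y0 < R"
    "\<And>N y. 0 \<le> y \<Longrightarrow> y \<le> y0 \<Longrightarrow> (\<Sum>n<N. ode_coeff a n * y ^ n) \<le> 3"
proof -
  define L where "L = 3\<^sup>2 * ps_fun a (R / 2) + 1"
  define y0 where "y0 = min (1 / L) (R / 6)"
  have "0 \<le> ps_fun a (R / 2)"
    using R by (intro ps_fun_nonneg a a_summable) simp_all
  then have L: "1 \<le> L"
    by (simp add: L_def)
  have y0: "0 < y0" "6 * y0 \<le> R" "L * y0 \<le> 1"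
    using L R by (auto simp: y0_def min_def field_simps)
  have "(\<Sum>n<N. ode_coeff a n * y ^ n) \<le> 3" if y: "0 \<le> y" "y \<le> y0" for N y
  proof -
    have "(\<Sum>n<N. ode_coeff a n * y ^ n) \<le> (\<Sum>n<Suc N. ode_coeff a n * y ^ n)"
      using ode_coeff_nonneg[OF a] y by simp
    also have "\<dots> < 2 + L * y"
      using y0 y by (intro ode_partial_sum_below_line a a_summable) (auto simp: L_def)
    also have "\<dots> \<le> 3"
      using y y0 L by simp (meson mult_left_mono order.trans zero_le_one)
    finally show ?thesis
      by simp
  qed
  with y0 show thesis
    using that by simp
qed

lemma ode_powser_has_derivative:
  assumes a: "\<And>k. 0 \<le> a k" and summable_y0: "summable (\<lambda>n. ode_coeff a n * y0 ^ n)"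
    and y: "0 \<le> y" "y < y0"
    and U: "summable (\<lambda>k. a k * (y * ps_fun (ode_coeff a) y) ^ k)"
  shows "(ps_fun (ode_coeff a) has_real_derivative
           (ps_fun (ode_coeff a) y)\<^sup>2 * ps_fun a (y * ps_fun (ode_coeff a) y)) (at y)"
proof -
  let ?H = "ps_fun (ode_coeff a)"
  have h: "nonneg_fps (Abs_fps (ode_coeff a))"
    using ode_coeff_nonneg[OF a] by (simp add: nonneg_fps_def)
  have "summable (\<lambda>n. ode_coeff a n * y ^ n)"
    by (rule summable_powser_nonneg_mono[OF ode_coeff_nonneg[OF a] summable_y0]) (use y in auto)
  then have "(\<lambda>n. Abs_fps (ode_coeff a) $ n * y ^ n) sums ?H y"
    by (simp add: ps_fun_def summable_sums)
  from sums_ode_rhs[OF a h y(1) this U]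
  have "(\<lambda>n. diffs (ode_coeff a) n * y ^ n) sums ((?H y)\<^sup>2 * ps_fun a (y * ?H y))"
    by (simp add: diffs_ode_coeff)
  moreover have "(?H has_real_derivative ps_fun (diffs (ode_coeff a)) y) (at y)"
    unfolding ps_fun_def by (rule termdiffs_strong[OF summable_y0]) (use y in simp)
  ultimately show ?thesis
    by (simp add: ps_fun_def sums_iff)
qed

lemma ode_powser_solution:
  assumes R: "0 < R" and a: "\<And>k. 0 \<le> a k"
    and a_summable: "\<And>x. 0 \<le> x \<Longrightarrow> x < R \<Longrightarrow> summable (\<lambda>k. a k * x ^ k)"
  defines "H \<equiv> ps_fun (ode_coeff a)"
  obtains y0 where "0 < y0" "summable (\<lambda>n. ode_coeff a n * y0 ^ n)"
    "\<And>y. 0 \<le> y \<Longrightarrow> y < y0 \<Longrightarrow> 1 \<le> H y \<and> y * H y < R \<and>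
       (H has_real_derivative (H y)\<^sup>2 * ps_fun a (y * H y)) (at y)"
proof -
  obtain y0 where y0: "0 < y0" "3 * y0 < R"
    and bound: "\<And>N y. 0 \<le> y \<Longrightarrow> y \<le> y0 \<Longrightarrow> (\<Sum>n<N. ode_coeff a n * y ^ n) \<le> 3"
    using ode_partial_sums_bounded[OF R a a_summable] by blast
  have h: "0 \<le> ode_coeff a n" for n
    by (rule ode_coeff_nonneg[OF a])
  have summable_y0: "summable (\<lambda>n. ode_coeff a n * y0 ^ n)"
    by (rule summableI_nonneg_bounded[where x = 3]) (use h y0 bound[of y0] in auto)
  have "1 \<le> H y \<and> y * H y < R \<and> (H has_real_derivative (H y)\<^sup>2 * ps_fun a (y * H y)) (at y)"
    if y: "0 \<le> y" "y < y0" for y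
  proof -
    have summable_y: "summable (\<lambda>n. ode_coeff a n * y ^ n)"
      by (rule summable_powser_nonneg_mono[OF h summable_y0]) (use y in auto)
    have "H y \<le> 3"
      unfolding H_def ps_fun_def by (rule suminf_le_const[OF summable_y]) (use bound y in auto)
    then have yH: "y * H y < R"
      using y y0 mult_left_mono[of "H y" 3 y] by linarith
    have "(\<Sum>n<1. ode_coeff a n * y ^ n) \<le> H y"
      unfolding H_def ps_fun_def by (rule sum_le_suminf[OF summable_y]) (use h y in auto)
    then have "1 \<le> H y"
      by simp
    moreover have "summable (\<lambda>k. a k * (y * H y) ^ k)"
      using yH y \<open>1 \<le> H y\<close> by (intro a_summable) simp_all
    ultimately show ?thesis
      using ode_powser_has_derivative[OF a summable_y0 y] yH by (simp add: H_def)
  qed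
  with y0 summable_y0 show thesis
    using that by blast
qed

lemma nonneg_fps_integral0: "nonneg_fps F \<Longrightarrow> nonneg_fps (fps_integral0 F)"
  by (simp add: nonneg_fps_def fps_integral_def)

lemma powser_integral_exp:
  fixes F :: "real fps"
  assumes F: "nonneg_fps F" and F_summable: "summable (\<lambda>n. F $ n * y0 ^ n)"
    and y: "0 \<le> y" "y < y0"
  defines "G \<equiv> fps_integral0 F"
  shows "(ps_fun (fps_nth G) has_real_derivative ps_fun (fps_nth F) y) (at y)"
    and "(\<lambda>n. (fps_exp 1 oo G) $ n * y ^ n) sums exp (ps_fun (fps_nth G) y)"
proof -
  have G_Suc: "G $ Suc n = F $ n / real (Suc n)" for n
    by (simp add: G_def divide_inverse mult.commute)
  have G: "nonneg_fps G" "G $ 0 = 0"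
    using nonneg_fps_integral0[OF F] by (simp_all add: G_def)
  have "summable (\<lambda>n. G $ Suc n * y0 ^ Suc n)"
  proof (rule summable_comparison_test'[OF summable_mult[OF F_summable, of y0], of 0])
    fix n
    have "G $ Suc n * y0 ^ Suc n = y0 * (F $ n * y0 ^ n) / real (Suc n)"
      by (simp add: G_Suc)
    also have "\<dots> \<le> y0 * (F $ n * y0 ^ n)"
      using divide_left_mono[of 1 "real (Suc n)" "y0 * (F $ n * y0 ^ n)"] F y
      by (simp add: nonneg_fps_def)
    finally show "norm (G $ Suc n * y0 ^ Suc n) \<le> y0 * (F $ n * y0 ^ n)"
      using G(1) y by (simp add: nonneg_fps_def)
  qed
  then have G_summable: "summable (\<lambda>n. G $ n * y0 ^ n)"
    by (subst (asm) summable_Suc_iff)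
  have "(ps_fun (fps_nth G) has_real_derivative ps_fun (diffs (fps_nth G)) y) (at y)"
    unfolding ps_fun_def by (rule termdiffs_strong[OF G_summable]) (use y in simp)
  moreover have "diffs (fps_nth G) = fps_nth F"
    by (simp add: diffs_def fun_eq_iff G_Suc)
  ultimately show "(ps_fun (fps_nth G) has_real_derivative ps_fun (fps_nth F) y) (at y)"
    by simp
  show "(\<lambda>n. (fps_exp 1 oo G) $ n * y ^ n) sums exp (ps_fun (fps_nth G) y)"
  proof (rule sums_fps_compose_nonneg[OF _ G y(1)])
    show "nonneg_fps (fps_exp 1)"
      by (simp add: nonneg_fps_def)
    show "(\<lambda>n. G $ n * y ^ n) sums ps_fun (fps_nth G) y"
      unfolding ps_fun_def using G(1) y
      by (intro summable_sums summable_powser_nonneg_mono[OF _ G_summable]) (auto simp: nonneg_fps_def)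
    show "(\<lambda>k. fps_exp 1 $ k * ps_fun (fps_nth G) y ^ k) sums exp (ps_fun (fps_nth G) y)"
      using exp_converges[of "ps_fun (fps_nth G) y"] by (simp add: divide_inverse_commute)
  qed
qed

lemma psd_mean_eq_of_sums_exp:
  assumes A: "open A" "y \<in> A"
    and sums: "\<And>t. t \<in> A \<Longrightarrow> (\<lambda>k. c k * t ^ k) sums exp (g t)"
    and g: "(g has_real_derivative g') (at y)"
  shows "psd_mean c y = y * g'"
proof -
  have ps: "ps_fun c t = exp (g t)" if "t \<in> A" for t
    using sums[OF that] by (simp add: ps_fun_def sums_iff)
  have "((\<lambda>t. exp (g t)) has_real_derivative exp (g y) * g') (at y)"
    using g by (auto intro!: derivative_eq_intros)
  then have "(ps_fun c has_real_derivative exp (g y) * g') (at y)"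
    by (rule has_field_derivative_transform_within_open[OF _ A]) (simp add: ps)
  then show ?thesis
    using ps[OF A(2)] by (simp add: psd_mean_def DERIV_imp_deriv)
qed

lemma rescaled_exp_powser:
  assumes q: "0 < q" and y: "y \<in> {0<..<y0 / q}"
    and E_sums: "\<And>t. t \<in> {0<..<y0} \<Longrightarrow> (\<lambda>n. E n * t ^ n) sums exp (G t)"
    and G_der: "\<And>t. t \<in> {0<..<y0} \<Longrightarrow> (G has_real_derivative H t) (at t)"
  shows "(\<lambda>k. exp K * E k * q ^ k * y ^ k) sums exp (K + G (q * y))"
    and "psd_mean (\<lambda>k. exp K * E k * q ^ k) y = q * y * H (q * y)"
proof -
  have qt: "q * t \<in> {0<..<y0}" if "t \<in> {0<..<y0 / q}" for t
    using that q by (auto simp: field_simps)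
  have sums: "(\<lambda>k. exp K * E k * q ^ k * t ^ k) sums exp (K + G (q * t))"
    if "t \<in> {0<..<y0 / q}" for t
    using sums_mult[OF E_sums[OF qt[OF that]], of "exp K"]
    by (simp add: exp_add power_mult_distrib mult_ac)
  then show "(\<lambda>k. exp K * E k * q ^ k * y ^ k) sums exp (K + G (q * y))"
    using y .
  have "((\<lambda>t. K + G (q * t)) has_real_derivative H (q * y) * q) (at y)"
    using DERIV_chain2[OF G_der DERIV_cmult_Id[of q y]] qt[OF y]
    by (auto intro!: derivative_eq_intros)
  then show "psd_mean (\<lambda>k. exp K * E k * q ^ k) y = q * y * H (q * y)"
    using psd_mean_eq_of_sums_exp[OF open_greaterThanLessThan y sums] by (simp add: mult_ac)
qed

text \<open>If \<open>s\<close> is a left inverse of the mean on \<open>(0,r)\<close>, it agrees with the inverse of the mean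
  on an open neighbourhood of every mean value, so the two have the same derivative there.\<close>
lemma psd_cov_eq_left_inverse:
  assumes A: "open A" and s_cont: "continuous_on A s" and s_inj: "inj_on s A"
    and mean: "\<And>y. y \<in> {0<..<r} \<Longrightarrow> psd_mean c y \<in> A \<and> s (psd_mean c y) = y"
    and x: "x \<in> psd_mean c ` {0<..<r}"
    and s_der: "(s has_real_derivative s') (at x)"
  shows "psd_cov c r x = s x / s'"
proof -
  define f where "f = the_inv_into {0<..<r} (psd_mean c)"
  define W where "W = A \<inter> s -` {0<..<r}"
  have mean_inj: "inj_on (psd_mean c) {0<..<r}"
    using mean by (metis inj_on_inverseI)
  have "open W"
    unfolding W_def using s_cont A by (rule continuous_open_preimage) simp
  have f_eq: "s w = f w" if "w \<in> W" for w
  proof -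
    have w: "s w \<in> {0<..<r}" "w \<in> A"
      using that by (auto simp: W_def)
    then have "psd_mean c (s w) = w"
      using mean[OF w(1)] s_inj by (auto dest: inj_onD)
    then show ?thesis
      unfolding f_def using the_inv_into_f_f[OF mean_inj w(1)] by simp
  qed
  have "x \<in> W"
    using x mean by (auto simp: W_def)
  have "(f has_real_derivative s') (at x)"
    using s_der \<open>open W\<close> \<open>x \<in> W\<close> f_eq by (rule has_field_derivative_transform_within_open)
  then show ?thesis
    using f_eq[OF \<open>x \<in> W\<close>] by (simp add: psd_cov_def f_def [symmetric] DERIV_imp_deriv)
qed

lemma same_derivative_imp_diff_const:
  fixes f g :: "real \<Rightarrow> real"
  assumes "\<And>x. x \<in> {a<..<b} \<Longrightarrow> (f has_real_derivative d x) (at x)"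
    and "\<And>x. x \<in> {a<..<b} \<Longrightarrow> (g has_real_derivative d x) (at x)"
  obtains K where "\<And>x. x \<in> {a<..<b} \<Longrightarrow> f x = g x + K"
proof -
  have "((\<lambda>x. f x - g x) has_real_derivative 0) (at x within {a<..<b})" if "x \<in> {a<..<b}" for x
    using DERIV_diff[OF assms[OF that]] by (simp add: has_field_derivative_at_within)
  then obtain K where K: "\<forall>x\<in>{a<..<b}. f x - g x = K"
    using has_field_derivative_zero_constant[OF convex_real_interval(8)] by blast
  show thesis
  proof (rule that)
    show "f x = g x + K" if "x \<in> {a<..<b}" for x
      using K that by force
  qed
qed

lemma antiderivatives_along_scaled_solution:
  fixes H G U V S B :: "real \<Rightarrow> real"
  assumes V_def: "\<And>x. V x = x * (1 + x * U x)"
    and V_pos: "\<And>z. z \<in> {0<..<R} \<Longrightarrow> 0 < V z"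
    and S_antider: "\<And>z. z \<in> {0<..<R} \<Longrightarrow> (S has_real_derivative 1 / V z) (at z)"
    and B_antider: "\<And>z. z \<in> {0<..<R} \<Longrightarrow> (B has_real_derivative z / V z) (at z)"
    and Z_in: "\<And>y. y \<in> {0<..<y0} \<Longrightarrow> y * H y \<in> {0<..<R}"
    and H_ode: "\<And>y. y \<in> {0<..<y0} \<Longrightarrow> (H has_real_derivative (H y)\<^sup>2 * U (y * H y)) (at y)"
    and G_der: "\<And>y. y \<in> {0<..<y0} \<Longrightarrow> (G has_real_derivative H y) (at y)"
  obtains K1 K2 where "\<And>y. y \<in> {0<..<y0} \<Longrightarrow> S (y * H y) = ln y + K1"
    and "\<And>y. y \<in> {0<..<y0} \<Longrightarrow> B (y * H y) = G y + K2"
proof -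
  have Z_der: "((\<lambda>y. y * H y) has_real_derivative V (y * H y) / y) (at y)"
    if y: "y \<in> {0<..<y0}" for y
  proof -
    have "((\<lambda>y. y * H y) has_real_derivative H y + y * ((H y)\<^sup>2 * U (y * H y))) (at y)"
      using H_ode[OF y] by (auto intro!: derivative_eq_intros)
    moreover have "H y + y * ((H y)\<^sup>2 * U (y * H y)) = V (y * H y) / y"
      using y by (simp add: V_def field_simps power2_eq_square)
    ultimately show ?thesis
      by simp
  qed
  have S_Z: "((\<lambda>y. S (y * H y)) has_real_derivative 1 / y) (at y)" if y: "y \<in> {0<..<y0}" for y
    using DERIV_chain2[OF S_antider[OF Z_in[OF y]] Z_der[OF y]] V_pos[OF Z_in[OF y]] by simp
  have ln: "(ln has_real_derivative 1 / y) (at y)" if "y \<in> {0<..<y0}" for y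
    using that by (intro DERIV_ln_divide) simp
  obtain K1 where K1: "\<And>y. y \<in> {0<..<y0} \<Longrightarrow> S (y * H y) = ln y + K1"
    using S_Z ln by (rule same_derivative_imp_diff_const[where a = 0 and b = y0]) blast+
  have B_Z: "((\<lambda>y. B (y * H y)) has_real_derivative H y) (at y)" if y: "y \<in> {0<..<y0}" for y
    using DERIV_chain2[OF B_antider[OF Z_in[OF y]] Z_der[OF y]] V_pos[OF Z_in[OF y]] y by simp
  obtain K2 where K2: "\<And>y. y \<in> {0<..<y0} \<Longrightarrow> B (y * H y) = G y + K2"
    using B_Z G_der by (rule same_derivative_imp_diff_const[where a = 0 and b = y0]) blast+
  show thesis
    using K1 K2 by (rule that)
qed

locale psd_covariance_setup =
  fixes a :: "nat \<Rightarrow> real" and U V S B :: "real \<Rightarrow> real" and R :: real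
  assumes R_pos: "R > 0"
    and a_nonneg: "\<And>k. a k \<ge> 0"
    and U_ps: "\<And>x. x \<in> {0<..<R} \<Longrightarrow> (\<lambda>k. a k * x ^ k) sums U x"
    and V_def: "\<And>x. V x = x * (1 + x * U x)"
    and S_antider: "\<And>z. z \<in> {0<..<R} \<Longrightarrow> (S has_real_derivative 1 / V z) (at z)"
    and B_antider: "\<And>z. z \<in> {0<..<R} \<Longrightarrow> (B has_real_derivative z / V z) (at z)"
begin

lemma a_summable: "0 \<le> x \<Longrightarrow> x < R \<Longrightarrow> summable (\<lambda>k. a k * x ^ k)"
  using U_ps[of x] powser_sums_zero[of a] by (cases "x = 0") (auto simp: sums_iff)

lemma U_eq_ps_fun: "x \<in> {0<..<R} \<Longrightarrow> U x = ps_fun a x"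
  using U_ps by (simp add: ps_fun_def sums_iff)

lemma V_pos: "z \<in> {0<..<R} \<Longrightarrow> 0 < V z"
  using ps_fun_nonneg[OF a_nonneg a_summable, of z] by (simp add: V_def U_eq_ps_fun add_pos_nonneg)

lemma inj_on_exp_S: "inj_on (\<lambda>z. exp (S z)) {0<..<R}"
proof (rule strict_mono_on_imp_inj_on, rule strict_mono_onI)
  fix x1 x2 assume x: "x1 \<in> {0<..<R}" "x2 \<in> {0<..<R}" "x1 < x2"
  have "S x1 < S x2"
  proof (rule DERIV_pos_imp_increasing[OF \<open>x1 < x2\<close>])
    fix z assume "x1 \<le> z" "z \<le> x2"
    then have "z \<in> {0<..<R}"
      using x by auto
    then show "\<exists>d. (S has_real_derivative d) (at z) \<and> 0 < d"
      using S_antider V_pos by (intro exI[of _ "1 / V z"]) simp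
  qed
  then show "exp (S x1) < exp (S x2)"
    by simp
qed

lemma continuous_on_exp_S: "continuous_on {0<..<R} (\<lambda>z. exp (S z))"
proof (rule continuous_on_exp)
  show "continuous_on {0<..<R} S"
    by (rule DERIV_continuous_on) (rule has_field_derivative_at_within[OF S_antider])
qed

lemma scaled_ode_solution:
  obtains y0 H G E where "0 < y0"
    "\<And>y. y \<in> {0<..<y0} \<Longrightarrow> y * H y \<in> {0<..<R}"
    "\<And>y. y \<in> {0<..<y0} \<Longrightarrow> (H has_real_derivative (H y)\<^sup>2 * U (y * H y)) (at y)"
    "\<And>y. y \<in> {0<..<y0} \<Longrightarrow> (G has_real_derivative H y) (at y)"
    "nonneg_fps E"
    "\<And>y. y \<in> {0<..<y0} \<Longrightarrow> (\<lambda>n. E $ n * y ^ n) sums exp (G y)"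
proof -
  define h where "h = Abs_fps (ode_coeff a)"
  define H where "H = ps_fun (fps_nth h)"
  define G where "G = ps_fun (fps_nth (fps_integral0 h))"
  obtain y0 where y0: "0 < y0" and h_summable: "summable (\<lambda>n. h $ n * y0 ^ n)"
    and H: "\<And>y. 0 \<le> y \<Longrightarrow> y < y0 \<Longrightarrow> 1 \<le> H y \<and> y * H y < R \<and>
       (H has_real_derivative (H y)\<^sup>2 * ps_fun a (y * H y)) (at y)"
    using ode_powser_solution[OF R_pos a_nonneg a_summable] by (auto simp: H_def h_def Abs_fps_inverse)
  have h: "nonneg_fps h"
    using ode_coeff_nonneg[OF a_nonneg] by (simp add: h_def nonneg_fps_def)
  have Z_in: "y * H y \<in> {0<..<R}" if "y \<in> {0<..<y0}" for y
    using H[of y] that by simp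
  show thesis
  proof (rule that)
    show "nonneg_fps (fps_exp 1 oo fps_integral0 h)"
      by (intro nonneg_fps_compose nonneg_fps_integral0 h) (simp add: nonneg_fps_def)
    show "(H has_real_derivative (H y)\<^sup>2 * U (y * H y)) (at y)" if "y \<in> {0<..<y0}" for y
      using H[of y] that U_eq_ps_fun[OF Z_in[OF that]] by simp
    show "(G has_real_derivative H y) (at y)" if "y \<in> {0<..<y0}" for y
      using powser_integral_exp(1)[OF h h_summable, of y] that by (simp add: G_def H_def)
    show "(\<lambda>n. (fps_exp 1 oo fps_integral0 h) $ n * y ^ n) sums exp (G y)" if "y \<in> {0<..<y0}" for y
      using powser_integral_exp(2)[OF h h_summable, of y] that by (simp add: G_def)
  qed (use y0 Z_in in auto)
qed

lemma psd_with_mean_inverse_exp_S: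
  obtains r c T where "0 < r" "\<And>k. 0 \<le> c k"
    "\<And>y. y \<in> {0<..<r} \<Longrightarrow> T y \<in> {0<..<R} \<and> exp (S (T y)) = y \<and>
       (\<lambda>k. c k * y ^ k) sums exp (B (T y)) \<and> psd_mean c y = T y"
proof -
  obtain y0 H G E where y0: "0 < y0"
    and Z_in: "\<And>y. y \<in> {0<..<y0} \<Longrightarrow> y * H y \<in> {0<..<R}"
    and H_ode: "\<And>y. y \<in> {0<..<y0} \<Longrightarrow> (H has_real_derivative (H y)\<^sup>2 * U (y * H y)) (at y)"
    and G_der: "\<And>y. y \<in> {0<..<y0} \<Longrightarrow> (G has_real_derivative H y) (at y)"
    and E: "nonneg_fps E"
    and E_sums: "\<And>y. y \<in> {0<..<y0} \<Longrightarrow> (\<lambda>n. E $ n * y ^ n) sums exp (G y)"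
    using scaled_ode_solution by blast
  obtain K1 K2 where K1: "\<And>y. y \<in> {0<..<y0} \<Longrightarrow> S (y * H y) = ln y + K1"
    and K2: "\<And>y. y \<in> {0<..<y0} \<Longrightarrow> B (y * H y) = G y + K2"
    using antiderivatives_along_scaled_solution[OF V_def V_pos S_antider B_antider Z_in H_ode G_der]
    by blast
  text \<open>Rescaling the parameter by \<open>q\<close> removes the constant \<open>K1\<close>, so that \<open>T\<close> inverts \<open>exp \<circ> S\<close>.\<close>
  define q where "q = exp (- K1)"
  define T where "T = (\<lambda>y. q * y * H (q * y))"
  define c where "c = (\<lambda>k. exp K2 * E $ k * q ^ k)"
  have q: "0 < q"
    by (simp add: q_def)
  have qy: "q * y \<in> {0<..<y0}" if "y \<in> {0<..<y0 / q}" for y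
    using that q by (auto simp: field_simps)
  show thesis
  proof (rule that)
    show "0 < y0 / q"
      using y0 q by simp
    show "0 \<le> c k" for k
      using E q by (simp add: c_def nonneg_fps_def)
  next
    fix y assume y: "y \<in> {0<..<y0 / q}"
    show "T y \<in> {0<..<R} \<and> exp (S (T y)) = y \<and> (\<lambda>k. c k * y ^ k) sums exp (B (T y)) \<and>
        psd_mean c y = T y"
    proof (intro conjI)
      show "T y \<in> {0<..<R}"
        using Z_in[OF qy[OF y]] by (simp add: T_def)
      show "exp (S (T y)) = y"
        using K1[OF qy[OF y]] q y by (simp add: T_def q_def exp_add exp_minus)
      show "(\<lambda>k. c k * y ^ k) sums exp (B (T y))"
        using rescaled_exp_powser(1)[OF q y E_sums G_der, where K = K2] K2[OF qy[OF y]]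
        by (simp add: c_def T_def add.commute)
      show "psd_mean c y = T y"
        using rescaled_exp_powser(2)[OF q y E_sums G_der, where K = K2] by (simp add: c_def T_def)
    qed
  qed
qed

lemma psd_cov_eq_V:
  assumes mean: "\<And>y. y \<in> {0<..<r} \<Longrightarrow> psd_mean c y \<in> {0<..<R} \<and> exp (S (psd_mean c y)) = y"
    and x: "x \<in> psd_mean c ` {0<..<r}"
  shows "psd_cov c r x = V x"
proof -
  have "x \<in> {0<..<R}"
    using x mean by auto
  then have "psd_cov c r x = exp (S x) / (exp (S x) * (1 / V x))"
    by (intro psd_cov_eq_left_inverse[OF open_greaterThanLessThan continuous_on_exp_S inj_on_exp_S
          mean x] DERIV_chain2[OF DERIV_exp S_antider])
  then show ?thesis
    using V_pos[OF \<open>x \<in> {0<..<R}\<close>] by simp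
qed

end

theorem theorem3:
  fixes a :: "nat \<Rightarrow> real" and U V S B :: "real \<Rightarrow> real" and R :: real
  assumes R_pos: "R > 0"
    and a_nonneg: "\<And>k. a k \<ge> 0"
    and U_ps: "\<And>x. x \<in> {0<..<R} \<Longrightarrow> (\<lambda>k. a k * x ^ k) sums U x"
    and V_def: "\<And>x. V x = x * (1 + x * U x)"
    and S_antider: "\<And>z. z \<in> {0<..<R} \<Longrightarrow> (S has_real_derivative 1 / V z) (at z)"
    and B_antider: "\<And>z. z \<in> {0<..<R} \<Longrightarrow> (B has_real_derivative z / V z) (at z)"
  shows "\<exists>c r. r > 0 \<and> (\<forall>k. c k \<ge> 0) \<and>
           {0<..<r} \<subseteq> (\<lambda>z. exp (S z)) ` {0<..<R} \<and>
           (\<forall>y\<in>{0<..<r}. (\<lambda>k. c k * y ^ k) sums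
               exp (B (the_inv_into {0<..<R} (\<lambda>z. exp (S z)) y))) \<and>
           (\<forall>x\<in>psd_mean c ` {0<..<r}. psd_cov c r x = V x)"
proof -
  interpret psd_covariance_setup a U V S B R
    by unfold_locales (fact assms)+
  obtain r c T where r: "0 < r" and c: "\<And>k. 0 \<le> c k"
    and T: "\<And>y. y \<in> {0<..<r} \<Longrightarrow> T y \<in> {0<..<R} \<and> exp (S (T y)) = y \<and>
       (\<lambda>k. c k * y ^ k) sums exp (B (T y)) \<and> psd_mean c y = T y"
    using psd_with_mean_inverse_exp_S by blast
  have mean: "psd_mean c y \<in> {0<..<R} \<and> exp (S (psd_mean c y)) = y" if "y \<in> {0<..<r}" for y
    using T[OF that] by simp
  have "the_inv_into {0<..<R} (\<lambda>z. exp (S z)) y = T y" if "y \<in> {0<..<r}" for y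
    by (rule the_inv_into_f_eq[OF inj_on_exp_S]) (use T[OF that] in auto)
  then have "\<forall>y\<in>{0<..<r}. (\<lambda>k. c k * y ^ k) sums exp (B (the_inv_into {0<..<R} (\<lambda>z. exp (S z)) y))"
    using T by simp
  moreover have "{0<..<r} \<subseteq> (\<lambda>z. exp (S z)) ` {0<..<R}"
    using mean by (metis image_eqI subsetI)
  ultimately show ?thesis
    using r c psd_cov_eq_V[OF mean] by blast
qed

end
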